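(* Let $\hbar>0$ and let $f\in L^2(\mathbb{R})$ be such that the nodal set of $Wf$ is bounded and $Wf$ is centered at the origin, so that $f=\mu(S^{-1})\big(\sum_{n=0}^N b_nh_n\big)$ with $b_N\neq0$ as in the context. If $Wf$ vanishes on a circle of radius $R$ centered at the origin, then $$N\geq\frac{R^2/\hbar-1}{2}.$$
   Context: For $f,g\in L^2(\mathbb{R})$, $W(f,g)(x,p)=\frac{1}{2\pi\hbar}\int_{\mathbb{R}} f(x+\tau/2)\overline{g(x-\tau/2)}e^{-\frac{i}{\hbar}p\tau}\,d\tau$ and $Wf=W(f,f)$. Hermite functions: $h_n(x)=\frac{1}{\sqrt[4]{\pi\hbar}\sqrt{2^nn!}}e^{-x^2/(2\hbar)}H_n(x/\sqrt{\hbar})$, $H_n(x)=(-1)^ne^{x^2}\frac{d^n}{dx^n}e^{-x^2}$. For a real $2\times2$ matrix $S$ with $\det S=1$, $\mu(S)$ is a metaplectic operator on $L^2(\mathbb{R})$, satisfying $W(\mu(S)f,\mu(S)g)(z)=W(f,g)(S^{-1}z)$. $Wf$ with bounded nodal set being centered at the origin means $f=\mu(S^{-1})\sum_{n=0}^Nb_nh_n$ (up to a unimodular constant) for some such $S$, $N\in\mathbb{N}_0$ and $b_0,\dots,b_N\in\mathbb{C}$, $b_N\ne0$, so that $Wf(z)=\sum_{n,m=0}^Nb_n\overline{b_m}W(h_n,h_m)(Sz)$; $N$ is the integer in this representation. *)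

theory Defs
  imports "HOL-Analysis.Analysis"
begin

definition wigner :: "real \<Rightarrow> (real \<Rightarrow> complex) \<Rightarrow> (real \<Rightarrow> complex) \<Rightarrow> real \<Rightarrow> real \<Rightarrow> complex" where
  "wigner hbar f g x p =
     complex_of_real (1 / (2 * pi * hbar)) *
     (LINT \<tau>|lborel. f (x + \<tau> / 2) * cnj (g (x - \<tau> / 2)) * exp (- \<i> * complex_of_real (p * \<tau> / hbar)))"

definition hermite_poly :: "nat \<Rightarrow> real \<Rightarrow> real" where
  "hermite_poly n x = (-1) ^ n * exp (x\<^sup>2) * ((deriv ^^ n) (\<lambda>t. exp (- t\<^sup>2)) x)"

definition hermite_fun :: "real \<Rightarrow> nat \<Rightarrow> real \<Rightarrow> complex" where
  "hermite_fun hbar n x = complex_of_real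
     (1 / (root 4 (pi * hbar) * sqrt (2 ^ n * fact n)) * exp (- x\<^sup>2 / (2 * hbar)) * hermite_poly n (x / sqrt hbar))"

definition square_integrable :: "(real \<Rightarrow> complex) \<Rightarrow> bool" where
  "square_integrable f \<longleftrightarrow> f \<in> borel_measurable lborel \<and> integrable lborel (\<lambda>x. (norm (f x))\<^sup>2)"

end

theory Submission
  imports Defs "HOL-Probability.Probability" "HOL-Computational_Algebra.Polynomial"
    "HOL-Real_Asymp.Real_Asymp"
begin

(* Substituting tau = 2 sqrt(hbar) s turns W(h_n, h_m)(x, p) into a Gaussian integral of
   H_n(u + s) H_m(u - s) against exp(-s^2 - 2 i v s), where u = x / sqrt hbar and v = p / sqrt hbar.
   Integration by parts gives Hermite-type recurrences in n and m, which identify W(h_n, h_m)(x, p)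
   as c_n c_m (pi hbar)^(-1/2) exp(-(x^2 + p^2)/hbar) Q_{n,m}(zeta), with c_n the normalising
   constant of h_n and Q_{n,m} an explicit polynomial in zeta = u - i v and conj zeta.
   In the coordinates S z the circle |z| = R becomes zeta = alpha e + gamma conj e with |e| = 1, and
   det S = 1 gives |gamma|^2 - |alpha|^2 = R^2/hbar. If Wf vanishes on the circle, then
   e^(2N) sum b_n conj(b_m) c_n c_m Q_{n,m}(zeta) is a polynomial in e vanishing on the unit circle,
   hence zero. Its top coefficient forces alpha = 0; its middle coefficient is then
   sum |b_n c_n|^2 2^n n! (-1)^n L_n(2 |gamma|^2) with the Laguerre polynomials L_n, which is
   positive as soon as 2 |gamma|^2 > 4N + 2. Hence R^2/hbar <= 2N + 1. *)

section \<open>Gaussian integrals of polynomials\<close>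

definition modulated_gaussian :: "real \<Rightarrow> real \<Rightarrow> complex" where
  "modulated_gaussian v s = exp (- (complex_of_real s ^ 2) - 2 * \<i> * complex_of_real v * complex_of_real s)"

lemma modulated_gaussian_measurable [measurable]: "modulated_gaussian v \<in> borel_measurable borel"
  unfolding modulated_gaussian_def by measurable

lemma norm_modulated_gaussian: "norm (modulated_gaussian v s) = exp (- (s\<^sup>2))"
  unfolding modulated_gaussian_def by (simp add: norm_exp_eq_Re power2_eq_square)

lemma modulated_gaussian_eq:
  "modulated_gaussian v s = complex_of_real (exp (- (s\<^sup>2))) * exp (- (2 * \<i> * complex_of_real (v * s)))"
  unfolding modulated_gaussian_def by (simp add: exp_add[symmetric] exp_of_real[symmetric] algebra_simps)

lemma integrable_power_times_gaussian: "integrable lborel (\<lambda>s::real. s ^ k * exp (- (s\<^sup>2)))"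
proof -
  have "integrable lborel (\<lambda>s. std_normal_density (0 + sqrt 2 * s) * (0 + sqrt 2 * s) ^ k)"
    using integrable_std_normal_moment[of k] by (rule lborel_integrable_real_affine) simp
  then have "integrable lborel
      (\<lambda>s. sqrt (2 * pi) / sqrt 2 ^ k * (std_normal_density (0 + sqrt 2 * s) * (0 + sqrt 2 * s) ^ k))"
    by (rule integrable_mult_right)
  moreover have "sqrt (2 * pi) / sqrt 2 ^ k * (std_normal_density (0 + sqrt 2 * s) * (0 + sqrt 2 * s) ^ k)
      = s ^ k * exp (- (s\<^sup>2))" for s
    by (simp add: std_normal_density_def power_mult_distrib field_simps)
  ultimately show ?thesis by simp
qed

lemma integrable_poly_times_modulated_gaussian:
  "integrable lborel (\<lambda>s. poly P (complex_of_real s) * modulated_gaussian v s)"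
proof -
  have monomial: "integrable lborel (\<lambda>s. complex_of_real s ^ i * modulated_gaussian v s)" for i
  proof (rule Bochner_Integration.integrable_bound[OF integrable_power_times_gaussian[of i]])
    show "AE s in lborel. norm (complex_of_real s ^ i * modulated_gaussian v s) \<le> norm (s ^ i * exp (- s\<^sup>2))"
      by (simp add: norm_mult norm_modulated_gaussian norm_power abs_mult power_abs)
  qed measurable
  have "integrable lborel (\<lambda>s. \<Sum>i\<le>degree P. coeff P i * (complex_of_real s ^ i * modulated_gaussian v s))"
    using monomial by auto
  then show ?thesis by (simp add: poly_altdef sum_distrib_right mult.assoc)
qed

lemma integral_modulated_gaussian:
  "(LINT s|lborel. modulated_gaussian v s) = complex_of_real (sqrt pi * exp (- (v\<^sup>2)))"
proof -
  define t where "t = - sqrt 2 * v"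
  have "char std_normal_distribution t = complex_of_real (exp (- (v\<^sup>2)))"
    by (simp add: char_std_normal_distribution t_def power_mult_distrib)
  moreover have "char std_normal_distribution t = (LINT x|lborel. std_normal_density x *\<^sub>R iexp (t * x))"
    unfolding char_def by (subst integral_density) (auto simp: normal_density_nonneg)
  moreover have "\<dots> = \<bar>sqrt 2\<bar> *\<^sub>R
      (LINT s|lborel. std_normal_density (0 + sqrt 2 * s) *\<^sub>R iexp (t * (0 + sqrt 2 * s)))"
    by (rule lborel_integral_real_affine) simp
  moreover have "(\<lambda>s. std_normal_density (0 + sqrt 2 * s) *\<^sub>R iexp (t * (0 + sqrt 2 * s)))
      = (\<lambda>s. (1 / sqrt (2 * pi)) *\<^sub>R modulated_gaussian v s)"
    by (rule ext) (simp add: std_normal_density_def modulated_gaussian_eq t_def power_mult_distrib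
        scaleR_conv_of_real field_simps)
  moreover have "sqrt (2 * pi) = sqrt 2 * sqrt pi"
    by (simp add: real_sqrt_mult)
  ultimately show ?thesis
    by (simp add: scaleR_conv_of_real field_simps)
qed

lemma tendsto_poly_times_modulated_gaussian:
  assumes decay: "\<And>i. ((\<lambda>s. \<bar>s\<bar> ^ i * exp (- (s\<^sup>2))) \<longlongrightarrow> 0) F"
  shows "((\<lambda>s. poly P (complex_of_real s) * modulated_gaussian v s) \<longlongrightarrow> 0) F"
proof (rule Lim_null_comparison)
  show "((\<lambda>s. \<Sum>i\<le>degree P. norm (coeff P i) * (\<bar>s\<bar> ^ i * exp (- (s\<^sup>2)))) \<longlongrightarrow> 0) F"
    by (intro tendsto_null_sum tendsto_mult_right_zero decay)
  have "norm (poly P (complex_of_real s) * modulated_gaussian v s)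
      \<le> (\<Sum>i\<le>degree P. norm (coeff P i) * (\<bar>s\<bar> ^ i * exp (- (s\<^sup>2))))" for s
  proof -
    have "norm (poly P (complex_of_real s) * modulated_gaussian v s)
        = norm (\<Sum>i\<le>degree P. coeff P i * complex_of_real s ^ i) * exp (- (s\<^sup>2))"
      by (simp add: poly_altdef norm_mult norm_modulated_gaussian)
    also have "\<dots> \<le> (\<Sum>i\<le>degree P. norm (coeff P i * complex_of_real s ^ i)) * exp (- (s\<^sup>2))"
      by (intro mult_right_mono norm_sum) auto
    finally show ?thesis
      by (simp add: sum_distrib_right norm_mult norm_power mult.assoc)
  qed
  then show "\<forall>\<^sub>F s in F. norm (poly P (complex_of_real s) * modulated_gaussian v s)
      \<le> (\<Sum>i\<le>degree P. norm (coeff P i) * (\<bar>s\<bar> ^ i * exp (- (s\<^sup>2))))"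
    by simp
qed

definition gaussian_pairing :: "real \<Rightarrow> complex poly \<Rightarrow> complex" where
  "gaussian_pairing v P = (LINT s|lborel. poly P (complex_of_real s) * modulated_gaussian v s)"

lemma gaussian_pairing_add: "gaussian_pairing v (P + Q) = gaussian_pairing v P + gaussian_pairing v Q"
  unfolding gaussian_pairing_def by (simp add: distrib_right integrable_poly_times_modulated_gaussian)

lemma gaussian_pairing_diff: "gaussian_pairing v (P - Q) = gaussian_pairing v P - gaussian_pairing v Q"
  unfolding gaussian_pairing_def by (simp add: left_diff_distrib integrable_poly_times_modulated_gaussian)

lemma gaussian_pairing_smult: "gaussian_pairing v (smult c P) = c * gaussian_pairing v P"
  unfolding gaussian_pairing_def by (simp add: mult.assoc)

lemma gaussian_pairing_minus: "gaussian_pairing v (- P) = - gaussian_pairing v P"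
  unfolding gaussian_pairing_def by simp

lemma gaussian_pairing_1: "gaussian_pairing v 1 = complex_of_real (sqrt pi * exp (- (v\<^sup>2)))"
  unfolding gaussian_pairing_def using integral_modulated_gaussian[of v] by simp

text \<open>The linear factor is minus the logarithmic derivative of the modulated Gaussian; the
  boundary terms vanish by Gaussian decay.\<close>

lemma gaussian_pairing_pderiv:
  "gaussian_pairing v (pderiv P) = gaussian_pairing v (P * [:2 * \<i> * complex_of_real v, 2:])"
proof -
  define Q where "Q = pderiv P - P * [:2 * \<i> * complex_of_real v, 2:]"
  define F where "F = (\<lambda>s. poly P (complex_of_real s) * modulated_gaussian v s)"
  define f where "f = (\<lambda>s. poly Q (complex_of_real s) * modulated_gaussian v s)"
  have "(F has_vector_derivative f s) (at s)" for s
  proof -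
    have "((\<lambda>z. poly P z * exp (- (z ^ 2) - 2 * \<i> * complex_of_real v * z)) has_field_derivative
        poly Q (complex_of_real s)
          * exp (- (complex_of_real s ^ 2) - 2 * \<i> * complex_of_real v * complex_of_real s))
        (at (complex_of_real s))"
      unfolding Q_def by (auto intro!: derivative_eq_intros simp: algebra_simps)
    from has_vector_derivative_real_field[OF this] show ?thesis
      unfolding F_def f_def modulated_gaussian_def by simp
  qed
  moreover have "isCont f s" for s
    unfolding f_def modulated_gaussian_def by (intro continuous_intros)
  moreover have "set_integrable lborel (einterval (- \<infinity>) \<infinity>) f"
    unfolding set_integrable_def f_def by (simp add: integrable_poly_times_modulated_gaussian)
  moreover have "((F \<circ> real_of_ereal) \<longlongrightarrow> 0) (at_right (- \<infinity>))"
    unfolding ereal_tendsto_simps F_def by (rule tendsto_poly_times_modulated_gaussian) real_asymp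
  moreover have "((F \<circ> real_of_ereal) \<longlongrightarrow> 0) (at_left \<infinity>)"
    unfolding ereal_tendsto_simps F_def by (rule tendsto_poly_times_modulated_gaussian) real_asymp
  ultimately have "(LBINT s=-\<infinity>..\<infinity>. f s) = 0 - 0"
    by (intro interval_integral_FTC_integrable) auto
  then have "gaussian_pairing v Q = 0"
    unfolding gaussian_pairing_def f_def interval_lebesgue_integral_def set_lebesgue_integral_def by simp
  then show ?thesis
    unfolding Q_def gaussian_pairing_diff by simp
qed

section \<open>Hermite polynomials\<close>

fun hermite :: "nat \<Rightarrow> 'a::comm_ring_1 poly" where
  "hermite 0 = 1"
| "hermite (Suc 0) = [:0, 2:]"
| "hermite (Suc (Suc n)) = [:0, 2:] * hermite (Suc n) - smult (2 * of_nat (Suc n)) (hermite n)"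

lemma poly_hermite_of_real: "poly (hermite n) (complex_of_real x) = complex_of_real (poly (hermite n) x)"
  by (induction n rule: hermite.induct) (simp_all add: algebra_simps)

lemma pderiv_hermite: "pderiv (hermite (Suc n) :: 'a::idom poly) = smult (2 * of_nat (Suc n)) (hermite n)"
proof (induction n rule: hermite.induct)
  case (3 n)
  let ?H = "hermite :: nat \<Rightarrow> 'a poly"
  have "pderiv (?H (Suc (Suc (Suc n))))
      = smult 2 (?H (Suc (Suc n))) + [:0, 2:] * pderiv (?H (Suc (Suc n)))
        - smult (2 * of_nat (Suc (Suc n))) (pderiv (?H (Suc n)))"
    by (simp del: hermite.simps
        add: pderiv_mult pderiv_diff pderiv_smult pderiv_pCons hermite.simps(3)[of "Suc n"])
  also have "\<dots> = smult 2 (?H (Suc (Suc n)))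
      + smult (2 * of_nat (Suc (Suc n))) ([:0, 2:] * ?H (Suc n) - smult (2 * of_nat (Suc n)) (?H n))"
    by (simp only: 3) (simp del: hermite.simps add: smult_diff_right)
  also have "\<dots> = smult (2 * of_nat (Suc (Suc (Suc n)))) (?H (Suc (Suc n)))"
    by (simp del: hermite.simps add: hermite.simps(3)[of n] algebra_simps smult_add_left[symmetric])
  finally show ?case .
qed (simp_all add: pderiv_pCons pderiv_mult algebra_simps)

lemma hermite_Suc_pderiv: "hermite (Suc n) = [:0, 2:] * hermite n - pderiv (hermite n :: 'a::idom poly)"
  by (cases n) (simp_all add: pderiv_hermite)

lemma hermite_Suc:
  "hermite (Suc n) = [:0, 2:] * hermite n - smult (2 * of_nat n) (hermite (n - 1) :: 'a::comm_ring_1 poly)"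
  by (cases n) simp_all

lemma higher_deriv_gaussian:
  "(deriv ^^ n) (\<lambda>t. exp (- t\<^sup>2)) = (\<lambda>x::real. (-1) ^ n * poly (hermite n) x * exp (- x\<^sup>2))"
proof (induction n)
  case (Suc n)
  have "((\<lambda>x::real. (-1) ^ n * poly (hermite n) x * exp (- x\<^sup>2)) has_real_derivative
      (-1) ^ Suc n * poly (hermite (Suc n)) x * exp (- x\<^sup>2)) (at x)" for x
    unfolding hermite_Suc_pderiv[of n]
    by (auto intro!: derivative_eq_intros simp: algebra_simps power2_eq_square)
  then show ?case
    using Suc by (auto intro!: DERIV_imp_deriv)
qed simp

lemma hermite_poly_eq: "hermite_poly n x = poly (hermite n) x"
  unfolding hermite_poly_def higher_deriv_gaussian by (simp add: exp_minus field_simps)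

definition hermite_affine :: "nat \<Rightarrow> complex \<Rightarrow> complex \<Rightarrow> complex poly" where
  "hermite_affine n a b = pcompose (hermite n) [:a, b:]"

lemma pderiv_hermite_affine:
  "pderiv (hermite_affine n a b) = smult (2 * of_nat n * b) (hermite_affine (n - 1) a b)"
  by (cases n) (simp_all add: hermite_affine_def pderiv_pcompose pderiv_hermite pcompose_smult pderiv_pCons
      mult_ac)

lemma hermite_affine_Suc:
  "hermite_affine (Suc n) a b
     = smult 2 ([:a, b:] * hermite_affine n a b) - smult (2 * of_nat n) (hermite_affine (n - 1) a b)"
  by (simp add: hermite_affine_def hermite_Suc pcompose_diff pcompose_mult pcompose_smult pcompose_pCons)

section \<open>The Wigner function of two Hermite functions\<close>

lemma choose_times_fact_Suc: "(m choose Suc k) * fact (Suc k) = m * ((m - 1) choose k) * (fact k :: nat)"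
proof -
  have "(m choose Suc k) * fact (Suc k) = (Suc k * (m choose Suc k)) * (fact k :: nat)"
    by (simp only: fact_Suc of_nat_id ac_simps)
  then show ?thesis
    by (simp only: binomial_absorption)
qed

definition wigner_hermite_coeff :: "nat \<Rightarrow> nat \<Rightarrow> nat \<Rightarrow> complex" where
  "wigner_hermite_coeff n m k = of_nat ((n choose k) * (m choose k) * fact k) * 2 ^ (n + m - k) * (-1) ^ k"

definition wigner_hermite_term :: "nat \<Rightarrow> nat \<Rightarrow> complex \<Rightarrow> nat \<Rightarrow> complex" where
  "wigner_hermite_term n m z k = wigner_hermite_coeff n m k * z ^ (n - k) * cnj z ^ (m - k)"

definition wigner_hermite_poly :: "nat \<Rightarrow> nat \<Rightarrow> complex \<Rightarrow> complex" where
  "wigner_hermite_poly n m z = (\<Sum>k\<le>n. wigner_hermite_term n m z k)"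

lemma wigner_hermite_term_eq_0: "n < k \<Longrightarrow> wigner_hermite_term n m z k = 0"
  by (simp add: wigner_hermite_term_def wigner_hermite_coeff_def)

lemma wigner_hermite_term_Suc_Suc:
  "wigner_hermite_term (Suc n) m z (Suc k)
     = 2 * z * wigner_hermite_term n m z (Suc k) - 2 * of_nat m * wigner_hermite_term n (m - 1) z k"
proof (cases "k < m \<and> k \<le> n")
  case False
  then show ?thesis
    by (cases m) (auto simp: wigner_hermite_term_def wigner_hermite_coeff_def binomial_eq_0)
next
  case True
  then obtain i j where m: "m = Suc (k + i)" and n: "n = k + j"
    by (metis le_add_diff_inverse less_iff_Suc_add)
  define w where "w = (-1) ^ Suc k * 2 ^ (n + m - k) * z ^ j * cnj z ^ i"
  have key: "(Suc n choose Suc k) * (m choose Suc k) * fact (Suc k)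
      = (n choose Suc k) * (m choose Suc k) * fact (Suc k) + m * (n choose k) * ((m - 1) choose k) * fact k"
    unfolding binomial_Suc_Suc add_mult_distrib mult.assoc choose_times_fact_Suc by (simp only: ac_simps)
  have lhs: "wigner_hermite_term (Suc n) m z (Suc k)
      = of_nat ((Suc n choose Suc k) * (m choose Suc k) * fact (Suc k)) * w"
    by (simp add: wigner_hermite_term_def wigner_hermite_coeff_def w_def m n)
  have first: "2 * z * wigner_hermite_term n m z (Suc k)
      = of_nat ((n choose Suc k) * (m choose Suc k) * fact (Suc k)) * w"
    by (cases j) (simp_all add: wigner_hermite_term_def wigner_hermite_coeff_def w_def m n)
  have second: "2 * of_nat m * wigner_hermite_term n (m - 1) z k
      = - of_nat (m * (n choose k) * ((m - 1) choose k) * fact k) * w"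
    by (simp add: wigner_hermite_term_def wigner_hermite_coeff_def w_def m n algebra_simps)
  show ?thesis
    unfolding lhs first second key by (simp only: of_nat_add distrib_right mult_minus_left diff_minus_eq_add)
qed

lemma wigner_hermite_poly_Suc:
  "wigner_hermite_poly (Suc n) m z
     = 2 * z * wigner_hermite_poly n m z - 2 * of_nat m * wigner_hermite_poly n (m - 1) z"
proof -
  have "wigner_hermite_poly (Suc n) m z
      = wigner_hermite_term (Suc n) m z 0 + (\<Sum>k\<le>n. wigner_hermite_term (Suc n) m z (Suc k))"
    unfolding wigner_hermite_poly_def by (rule sum.atMost_Suc_shift)
  also have "\<dots> = 2 * z * (wigner_hermite_term n m z 0 + (\<Sum>k\<le>n. wigner_hermite_term n m z (Suc k)))
      - 2 * of_nat m * wigner_hermite_poly n (m - 1) z"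
    by (simp add: wigner_hermite_term_Suc_Suc wigner_hermite_poly_def sum_subtractf sum_distrib_left
        algebra_simps) (simp add: wigner_hermite_term_def wigner_hermite_coeff_def)
  also have "wigner_hermite_term n m z 0 + (\<Sum>k\<le>n. wigner_hermite_term n m z (Suc k))
      = wigner_hermite_poly n m z"
    unfolding wigner_hermite_poly_def sum.atMost_Suc_shift[symmetric] by (simp add: wigner_hermite_term_eq_0)
  finally show ?thesis .
qed

lemma wigner_hermite_poly_0: "wigner_hermite_poly 0 m z = 2 ^ m * cnj z ^ m"
  by (simp add: wigner_hermite_poly_def wigner_hermite_term_def wigner_hermite_coeff_def)

definition hermite_pairing :: "complex \<Rightarrow> real \<Rightarrow> nat \<Rightarrow> nat \<Rightarrow> complex" where
  "hermite_pairing u v n m = gaussian_pairing v (hermite_affine n u 1 * hermite_affine m u (-1))"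

lemma hermite_pairing_by_parts:
  "gaussian_pairing v (hermite_affine n u 1 * hermite_affine m u (-1) * [:2 * \<i> * complex_of_real v, 2:])
     = 2 * of_nat n * hermite_pairing u v (n - 1) m - 2 * of_nat m * hermite_pairing u v n (m - 1)"
proof -
  have "gaussian_pairing v (hermite_affine n u 1 * hermite_affine m u (-1) * [:2 * \<i> * complex_of_real v, 2:])
      = gaussian_pairing v (pderiv (hermite_affine n u 1 * hermite_affine m u (-1)))"
    by (rule gaussian_pairing_pderiv[symmetric])
  also have "pderiv (hermite_affine n u 1 * hermite_affine m u (-1))
      = smult (2 * of_nat n) (hermite_affine (n - 1) u 1 * hermite_affine m u (-1))
        - smult (2 * of_nat m) (hermite_affine n u 1 * hermite_affine (m - 1) u (-1))"
    by (simp add: pderiv_mult pderiv_hermite_affine algebra_simps)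
  finally show ?thesis
    by (simp add: gaussian_pairing_diff gaussian_pairing_smult hermite_pairing_def)
qed

lemma hermite_pairing_Suc_left:
  "hermite_pairing u v (Suc n) m
     = 2 * (u - \<i> * complex_of_real v) * hermite_pairing u v n m - 2 * of_nat m * hermite_pairing u v n (m - 1)"
proof -
  define P where "P = hermite_affine n u 1 * hermite_affine m u (-1)"
  define c where "c = [:2 * \<i> * complex_of_real v, 2:]"
  have "hermite_affine (Suc n) u 1 * hermite_affine m u (-1)
      = P * c + smult (2 * u - 2 * \<i> * complex_of_real v) P
        - smult (2 * of_nat n) (hermite_affine (n - 1) u 1 * hermite_affine m u (-1))"
    unfolding hermite_affine_Suc P_def c_def
    by (intro poly_eq_poly_eq_iff[THEN iffD1] ext) (simp add: algebra_simps)
  then have "hermite_pairing u v (Suc n) m = gaussian_pairing v (P * c)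
      + (2 * u - 2 * \<i> * complex_of_real v) * gaussian_pairing v P - 2 * of_nat n * hermite_pairing u v (n - 1) m"
    unfolding hermite_pairing_def
    by (simp only: gaussian_pairing_add gaussian_pairing_diff gaussian_pairing_smult)
  also have "gaussian_pairing v (P * c)
      = 2 * of_nat n * hermite_pairing u v (n - 1) m - 2 * of_nat m * hermite_pairing u v n (m - 1)"
    unfolding P_def c_def by (rule hermite_pairing_by_parts)
  finally show ?thesis
    by (simp add: hermite_pairing_def P_def algebra_simps)
qed

lemma hermite_pairing_Suc_right:
  "hermite_pairing u v n (Suc m)
     = 2 * (u + \<i> * complex_of_real v) * hermite_pairing u v n m - 2 * of_nat n * hermite_pairing u v (n - 1) m"
proof -
  define P where "P = hermite_affine n u 1 * hermite_affine m u (-1)"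
  define c where "c = [:2 * \<i> * complex_of_real v, 2:]"
  have "hermite_affine n u 1 * hermite_affine (Suc m) u (-1)
      = - (P * c) + smult (2 * u + 2 * \<i> * complex_of_real v) P
        - smult (2 * of_nat m) (hermite_affine n u 1 * hermite_affine (m - 1) u (-1))"
    unfolding hermite_affine_Suc P_def c_def
    by (intro poly_eq_poly_eq_iff[THEN iffD1] ext) (simp add: algebra_simps)
  then have "hermite_pairing u v n (Suc m) = - gaussian_pairing v (P * c)
      + (2 * u + 2 * \<i> * complex_of_real v) * gaussian_pairing v P - 2 * of_nat m * hermite_pairing u v n (m - 1)"
    unfolding hermite_pairing_def
    by (simp only: gaussian_pairing_add gaussian_pairing_diff gaussian_pairing_smult gaussian_pairing_minus)
  also have "gaussian_pairing v (P * c)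
      = 2 * of_nat n * hermite_pairing u v (n - 1) m - 2 * of_nat m * hermite_pairing u v n (m - 1)"
    unfolding P_def c_def by (rule hermite_pairing_by_parts)
  finally show ?thesis
    by (simp add: hermite_pairing_def P_def algebra_simps)
qed

lemma hermite_pairing_eq:
  "hermite_pairing (complex_of_real u) v n m
     = complex_of_real (sqrt pi * exp (- (v\<^sup>2)))
       * wigner_hermite_poly n m (complex_of_real u - \<i> * complex_of_real v)"
proof (induction n arbitrary: m)
  case 0
  have "cnj (complex_of_real u - \<i> * complex_of_real v) = complex_of_real u + \<i> * complex_of_real v"
    by (simp add: complex_eq_iff)
  moreover have "hermite_pairing u v 0 0 = complex_of_real (sqrt pi * exp (- (v\<^sup>2)))"
    by (simp add: hermite_pairing_def hermite_affine_def pcompose_1 gaussian_pairing_1)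
  ultimately show ?case
    by (induction m) (simp_all add: hermite_pairing_Suc_right wigner_hermite_poly_0 algebra_simps)
next
  case (Suc n)
  then show ?case
    by (simp add: hermite_pairing_Suc_left wigner_hermite_poly_Suc algebra_simps)
qed

definition hermite_norm :: "real \<Rightarrow> nat \<Rightarrow> real" where
  "hermite_norm hbar n = 1 / (root 4 (pi * hbar) * sqrt (2 ^ n * fact n))"

lemma hermite_norm_pos: "hbar > 0 \<Longrightarrow> hermite_norm hbar n > 0"
  by (simp add: hermite_norm_def)

lemma hermite_fun_eq:
  "hermite_fun hbar n x
     = complex_of_real (hermite_norm hbar n * exp (- x\<^sup>2 / (2 * hbar)) * poly (hermite n) (x / sqrt hbar))"
  unfolding hermite_fun_def hermite_norm_def hermite_poly_eq ..

lemma poly_hermite_affine_of_real: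
  "poly (hermite_affine n (complex_of_real u) (complex_of_real b)) (complex_of_real s)
     = complex_of_real (poly (hermite n) (u + b * s))"
  by (simp add: hermite_affine_def poly_pcompose flip: poly_hermite_of_real) (simp add: mult.commute)

lemma wigner_integrand_hermite_fun:
  fixes hbar x p s \<tau> :: real
  assumes "hbar > 0" and \<tau>: "\<tau> = 2 * sqrt hbar * s"
  defines "u \<equiv> x / sqrt hbar" and "v \<equiv> p / sqrt hbar"
  shows "hermite_fun hbar n (x + \<tau> / 2) * cnj (hermite_fun hbar m (x - \<tau> / 2))
           * exp (- \<i> * complex_of_real (p * \<tau> / hbar))
         = complex_of_real (hermite_norm hbar n * hermite_norm hbar m * exp (- x\<^sup>2 / hbar))
           * (poly (hermite_affine n (complex_of_real u) 1 * hermite_affine m (complex_of_real u) (-1))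
                (complex_of_real s) * modulated_gaussian v s)"
proof -
  have sqrt: "sqrt hbar > 0" "sqrt hbar * sqrt hbar = hbar"
    using assms by simp_all
  have args: "(x + \<tau> / 2) / sqrt hbar = u + s" "(x - \<tau> / 2) / sqrt hbar = u - s"
    unfolding u_def \<tau> using sqrt by (simp_all add: field_simps)
  have gauss: "exp (- (x + \<tau> / 2)\<^sup>2 / (2 * hbar)) * exp (- (x - \<tau> / 2)\<^sup>2 / (2 * hbar))
      = exp (- x\<^sup>2 / hbar) * exp (- s\<^sup>2)"
    unfolding exp_add[symmetric] \<tau> using sqrt by (simp add: field_simps power2_eq_square)
  have "p * \<tau> / hbar = 2 * (v * s)"
    unfolding v_def \<tau> using sqrt by (simp add: field_simps)
  then have phase: "exp (- \<i> * complex_of_real (p * \<tau> / hbar)) = exp (- (2 * \<i> * complex_of_real (v * s)))"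
    by (simp add: algebra_simps)
  have "hermite_fun hbar n (x + \<tau> / 2) * cnj (hermite_fun hbar m (x - \<tau> / 2))
        * exp (- \<i> * complex_of_real (p * \<tau> / hbar))
      = complex_of_real (hermite_norm hbar n * hermite_norm hbar m
          * (exp (- (x + \<tau> / 2)\<^sup>2 / (2 * hbar)) * exp (- (x - \<tau> / 2)\<^sup>2 / (2 * hbar)))
          * (poly (hermite n) (u + s) * poly (hermite m) (u - s)))
        * exp (- \<i> * complex_of_real (p * \<tau> / hbar))"
    unfolding hermite_fun_eq args[symmetric] by (simp add: algebra_simps)
  also have "\<dots> = complex_of_real (hermite_norm hbar n * hermite_norm hbar m * exp (- x\<^sup>2 / hbar))
           * (poly (hermite_affine n (complex_of_real u) 1 * hermite_affine m (complex_of_real u) (-1))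
                (complex_of_real s) * modulated_gaussian v s)"
    unfolding gauss phase modulated_gaussian_eq poly_mult poly_hermite_affine_of_real[of _ _ 1, simplified]
      poly_hermite_affine_of_real[of _ _ "-1", simplified]
    by (simp add: algebra_simps)
  finally show ?thesis .
qed

lemma wigner_hermite_fun:
  assumes "hbar > 0"
  shows "wigner hbar (hermite_fun hbar n) (hermite_fun hbar m) x p
    = complex_of_real
        (hermite_norm hbar n * hermite_norm hbar m / sqrt (pi * hbar) * exp (- (x\<^sup>2 + p\<^sup>2) / hbar))
      * wigner_hermite_poly n m (complex_of_real (x / sqrt hbar) - \<i> * complex_of_real (p / sqrt hbar))"
proof -
  define u where "u = x / sqrt hbar"
  define v where "v = p / sqrt hbar"
  define F where "F \<tau> = hermite_fun hbar n (x + \<tau> / 2) * cnj (hermite_fun hbar m (x - \<tau> / 2))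
      * exp (- \<i> * complex_of_real (p * \<tau> / hbar))" for \<tau>
  have sqrt: "sqrt hbar > 0" "sqrt hbar * sqrt hbar = hbar"
    using assms by simp_all
  have "(LINT \<tau>|lborel. F \<tau>) = \<bar>2 * sqrt hbar\<bar> *\<^sub>R (LINT s|lborel. F (0 + 2 * sqrt hbar * s))"
    by (rule lborel_integral_real_affine) (use sqrt in simp)
  also have "\<dots> = complex_of_real
        (2 * sqrt hbar * hermite_norm hbar n * hermite_norm hbar m * exp (- x\<^sup>2 / hbar))
      * hermite_pairing (complex_of_real u) v n m"
  proof -
    have "F (0 + 2 * sqrt hbar * s)
        = complex_of_real (hermite_norm hbar n * hermite_norm hbar m * exp (- x\<^sup>2 / hbar))
          * (poly (hermite_affine n (complex_of_real u) 1 * hermite_affine m (complex_of_real u) (-1))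
              (complex_of_real s) * modulated_gaussian v s)" for s
      unfolding F_def u_def v_def by (rule wigner_integrand_hermite_fun[OF assms]) simp
    then show ?thesis
      using sqrt by (simp add: hermite_pairing_def gaussian_pairing_def scaleR_conv_of_real mult.assoc)
  qed
  finally have "wigner hbar (hermite_fun hbar n) (hermite_fun hbar m) x p
      = complex_of_real (1 / (2 * pi * hbar) * (2 * sqrt hbar) * sqrt pi
          * hermite_norm hbar n * hermite_norm hbar m * (exp (- x\<^sup>2 / hbar) * exp (- v\<^sup>2)))
        * wigner_hermite_poly n m (complex_of_real u - \<i> * complex_of_real v)"
    unfolding wigner_def F_def[symmetric] hermite_pairing_eq by (simp add: mult_ac)
  also have "exp (- x\<^sup>2 / hbar) * exp (- v\<^sup>2) = exp (- (x\<^sup>2 + p\<^sup>2) / hbar)"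
    unfolding exp_add[symmetric] v_def using assms by (simp add: power_divide field_simps)
  also have "1 / (2 * pi * hbar) * (2 * sqrt hbar) * sqrt pi = 1 / sqrt (pi * hbar)"
    using sqrt by (simp add: real_sqrt_mult field_simps)
  finally show ?thesis
    unfolding u_def v_def by (simp add: mult_ac)
qed

lemma wigner_hermite_superposition:
  assumes "hbar > 0"
  shows "(\<Sum>n\<le>N. \<Sum>m\<le>N. b n * cnj (b m) * wigner hbar (hermite_fun hbar n) (hermite_fun hbar m) x p)
    = complex_of_real (exp (- (x\<^sup>2 + p\<^sup>2) / hbar) / sqrt (pi * hbar))
      * (\<Sum>n\<le>N. \<Sum>m\<le>N. b n * complex_of_real (hermite_norm hbar n)
           * cnj (b m * complex_of_real (hermite_norm hbar m))
           * wigner_hermite_poly n m (complex_of_real (x / sqrt hbar) - \<i> * complex_of_real (p / sqrt hbar)))"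
  unfolding wigner_hermite_fun[OF assms] sum_distrib_left by (intro sum.cong refl) (simp add: mult_ac)

section \<open>Laguerre polynomials\<close>

lemma choose_Suc_Suc_recurrence:
  "real (Suc (Suc n)) * real (Suc (Suc n) choose Suc i)
     = real (2 * n + 3) * real (Suc n choose Suc i) + real (Suc i) * real (Suc n choose i)
       - real (Suc n) * real (n choose Suc i)"
proof -
  have absorb: "(real n + 1 - real i) * real (Suc n choose i) = (real n + 1) * real (n choose i)"
  proof (cases "i \<le> Suc n")
    case True
    have "real (Suc n - i) * real (Suc n choose i) = real (Suc n) * real (n choose i)"
      using binomial_absorb_comp[of "Suc n" i] by (metis diff_Suc_1 of_nat_mult)
    with True show ?thesis
      by (simp add: of_nat_diff ac_simps)
  qed (simp add: binomial_eq_0)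
  show ?thesis
    using absorb by (simp add: algebra_simps)
qed

definition laguerre :: "nat \<Rightarrow> real \<Rightarrow> real" where
  "laguerre n x = (\<Sum>j\<le>n. real (n choose j) * (- x) ^ j / fact j)"

lemma laguerre_extend: "n \<le> M \<Longrightarrow> laguerre n x = (\<Sum>j\<le>M. real (n choose j) * (- x) ^ j / fact j)"
  unfolding laguerre_def by (rule sum.mono_neutral_left) auto

lemma laguerre_term_recurrence:
  "real (Suc (Suc n)) * (real (Suc (Suc n) choose Suc i) * y ^ Suc i / fact (Suc i))
     = real (2 * n + 3) * (real (Suc n choose Suc i) * y ^ Suc i / fact (Suc i))
       + y * (real (Suc n choose i) * y ^ i / fact i)
       - real (Suc n) * (real (n choose Suc i) * y ^ Suc i / fact (Suc i))"
proof -
  have "real (Suc (Suc n)) * (real (Suc (Suc n) choose Suc i) * y ^ Suc i / fact (Suc i))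
      = (real (Suc (Suc n)) * real (Suc (Suc n) choose Suc i)) * (y ^ Suc i / fact (Suc i))"
    by simp
  also have "\<dots> = (real (2 * n + 3) * real (Suc n choose Suc i) + real (Suc i) * real (Suc n choose i)
      - real (Suc n) * real (n choose Suc i)) * (y ^ Suc i / fact (Suc i))"
    by (simp only: choose_Suc_Suc_recurrence)
  also have "(real (Suc i) * real (Suc n choose i)) * (y ^ Suc i / fact (Suc i))
      = y * (real (Suc n choose i) * y ^ i / fact i)"
    by (simp add: field_simps del: binomial_Suc_Suc of_nat_Suc)
  then have "(real (2 * n + 3) * real (Suc n choose Suc i) + real (Suc i) * real (Suc n choose i)
      - real (Suc n) * real (n choose Suc i)) * (y ^ Suc i / fact (Suc i))
      = real (2 * n + 3) * (real (Suc n choose Suc i) * y ^ Suc i / fact (Suc i))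
        + y * (real (Suc n choose i) * y ^ i / fact i)
        - real (Suc n) * (real (n choose Suc i) * y ^ Suc i / fact (Suc i))"
    by (simp only: left_diff_distrib distrib_right) simp
  finally show ?thesis .
qed

lemma laguerre_Suc_Suc:
  "real (Suc (Suc n)) * laguerre (Suc (Suc n)) x
     = (real (2 * n + 3) - x) * laguerre (Suc n) x - real (Suc n) * laguerre n x"
proof -
  define t where "t m j = real (m choose j) * (- x) ^ j / fact j" for m j
  have shift: "laguerre m x = 1 + (\<Sum>i\<le>Suc n. t m (Suc i))" if "m \<le> Suc (Suc n)" for m
    unfolding laguerre_extend[OF that] sum.atMost_Suc_shift by (simp add: t_def)
  have terms: "(\<Sum>i\<le>Suc n. real (Suc (Suc n)) * t (Suc (Suc n)) (Suc i))
      = (\<Sum>i\<le>Suc n. real (2 * n + 3) * t (Suc n) (Suc i) + (- x) * t (Suc n) i - real (Suc n) * t n (Suc i))"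
    unfolding t_def by (rule sum.cong[OF refl]) (rule laguerre_term_recurrence)
  have "real (Suc (Suc n)) * laguerre (Suc (Suc n)) x
      = real (Suc (Suc n)) + (\<Sum>i\<le>Suc n. real (Suc (Suc n)) * t (Suc (Suc n)) (Suc i))"
    unfolding shift[OF order_refl] by (simp add: sum_distrib_left algebra_simps)
  also have "\<dots> = real (2 * n + 3) * (1 + (\<Sum>i\<le>Suc n. t (Suc n) (Suc i))) + (- x) * (\<Sum>i\<le>Suc n. t (Suc n) i)
      - real (Suc n) * (1 + (\<Sum>i\<le>Suc n. t n (Suc i)))"
    unfolding terms
    by (simp only: sum.distrib sum_subtractf sum_distrib_left distrib_left) (simp add: algebra_simps)
  also have "\<dots> = (real (2 * n + 3) - x) * laguerre (Suc n) x - real (Suc n) * laguerre n x"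
  proof -
    have "1 + (\<Sum>i\<le>Suc n. t (Suc n) (Suc i)) = laguerre (Suc n) x"
      "1 + (\<Sum>i\<le>Suc n. t n (Suc i)) = laguerre n x"
      using shift[of "Suc n"] shift[of n] by simp_all
    moreover have "(\<Sum>i\<le>Suc n. t (Suc n) i) = laguerre (Suc n) x"
      by (simp add: laguerre_def t_def)
    ultimately show ?thesis
      by (simp add: algebra_simps)
  qed
  finally show ?thesis .
qed

text \<open>With \<open>P n = (-1)\<^sup>n L\<^sub>n(x)\<close> the recurrence gives
  \<open>(n + 2) P (n + 2) \<ge> (x - 3 n - 4) P (n + 1) \<ge> (n + 2) P (n + 1)\<close> as long as \<open>x \<ge> 4 n + 6\<close>.\<close>

lemma laguerre_sign_mono:
  assumes x: "x > 4 * real N + 2" and n: "Suc n \<le> N"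
  shows "0 < (-1) ^ n * laguerre n x \<and> (-1) ^ n * laguerre n x \<le> (-1) ^ Suc n * laguerre (Suc n) x"
  using n
proof (induction n)
  case 0
  then show ?case
    using x by (simp add: laguerre_def)
next
  case (Suc n)
  define P where "P k = (-1) ^ k * laguerre k x" for k
  have IH: "0 < P n" "P n \<le> P (Suc n)"
    using Suc by (auto simp: P_def)
  have rec: "real (Suc (Suc n)) * P (Suc (Suc n)) = (x - real (2 * n + 3)) * P (Suc n) - real (Suc n) * P n"
    unfolding P_def using arg_cong[OF laguerre_Suc_Suc[of n x], of "\<lambda>t. (-1) ^ n * t"]
    by (simp add: algebra_simps)
  have pos: "0 < P (Suc n)"
    using IH by linarith
  have "real (Suc n) * P n \<le> real (Suc n) * P (Suc n)"
    using IH by (intro mult_left_mono) auto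
  moreover have "real (Suc (Suc n)) * P (Suc n) \<le> (x - real (2 * n + 3) - real (Suc n)) * P (Suc n)"
    using pos x Suc.prems by (intro mult_right_mono) auto
  ultimately have "real (Suc (Suc n)) * P (Suc n) \<le> real (Suc (Suc n)) * P (Suc (Suc n))"
    unfolding rec by (simp add: algebra_simps)
  then have "P (Suc n) \<le> P (Suc (Suc n))"
    by (simp del: of_nat_Suc)
  with pos show ?case
    by (simp add: P_def)
qed

lemma laguerre_sign_pos:
  assumes "x > 4 * real N + 2" and "n \<le> N"
  shows "0 < (-1) ^ n * laguerre n x"
proof (cases n)
  case (Suc k)
  then show ?thesis
    using laguerre_sign_mono[OF assms(1), of k] assms(2) by auto
qed (simp add: laguerre_def)

lemma laguerre_reversed:
  "(-1) ^ n * fact n * laguerre n x = (\<Sum>k\<le>n. (-1) ^ k * real ((n choose k)\<^sup>2 * fact k) * x ^ (n - k))"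
proof -
  have "(-1) ^ n * fact n * laguerre n x
      = (\<Sum>k\<le>n. (-1) ^ n * fact n * (real (n choose (n - k)) * (- x) ^ (n - k) / fact (n - k)))"
    unfolding laguerre_def sum_distrib_left atMost_atLeast0
    by (subst sum.atLeastAtMost_rev) simp
  also have "\<dots> = (\<Sum>k\<le>n. (-1) ^ k * real ((n choose k)\<^sup>2 * fact k) * x ^ (n - k))"
  proof (rule sum.cong[OF refl])
    fix k assume "k \<in> {..n}"
    define j where "j = n - k"
    with \<open>k \<in> {..n}\<close> have n: "n = k + j"
      by simp
    have fact: "fact (k + j) = fact k * fact j * real ((k + j) choose k)"
      using binomial_fact[of k "k + j", where 'a = real] by (simp add: field_simps)
    have sign: "(-1::real) ^ (k + j) * (- x) ^ j = (-1) ^ k * x ^ j"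
      by (simp add: power_add power_minus')
    have symm: "(k + j) choose j = (k + j) choose k"
      using binomial_symmetric[of k "k + j"] by simp
    have "(-1) ^ n * fact n * (real (n choose (n - k)) * (- x) ^ (n - k) / fact (n - k))
        = ((-1) ^ (k + j) * (- x) ^ j) * real ((k + j) choose k) * (fact (k + j) / fact j)"
      unfolding n by (simp add: symm)
    also have "\<dots> = (-1) ^ k * real ((n choose k)\<^sup>2 * fact k) * x ^ (n - k)"
      unfolding sign fact n by (simp add: power2_eq_square)
    finally show "(-1) ^ n * fact n * (real (n choose (n - k)) * (- x) ^ (n - k) / fact (n - k))
        = (-1) ^ k * real ((n choose k)\<^sup>2 * fact k) * x ^ (n - k)" .
  qed
  finally show ?thesis .
qed

lemma wigner_hermite_poly_diagonal:
  "wigner_hermite_poly n n z = complex_of_real (2 ^ n * fact n * ((-1) ^ n * laguerre n (2 * (cmod z)\<^sup>2)))"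
proof -
  have "z ^ i * cnj z ^ i = complex_of_real (((cmod z)\<^sup>2) ^ i)" for i
    unfolding power_mult_distrib[symmetric] complex_norm_square[symmetric] by simp
  then have "wigner_hermite_poly n n z
      = complex_of_real
          (\<Sum>k\<le>n. real ((n choose k)\<^sup>2 * fact k) * 2 ^ (n + n - k) * (-1) ^ k * ((cmod z)\<^sup>2) ^ (n - k))"
    by (simp add: wigner_hermite_poly_def wigner_hermite_term_def wigner_hermite_coeff_def
        power2_eq_square mult.assoc)
  also have "(\<Sum>k\<le>n. real ((n choose k)\<^sup>2 * fact k) * 2 ^ (n + n - k) * (-1) ^ k * ((cmod z)\<^sup>2) ^ (n - k))
      = 2 ^ n * (\<Sum>k\<le>n. (-1) ^ k * real ((n choose k)\<^sup>2 * fact k) * (2 * (cmod z)\<^sup>2) ^ (n - k))"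
    unfolding sum_distrib_left
  proof (intro sum.cong refl)
    fix k assume "k \<in> {..n}"
    then have exp: "n + n - k = n + (n - k)"
      by simp
    show "real ((n choose k)\<^sup>2 * fact k) * 2 ^ (n + n - k) * (-1) ^ k * ((cmod z)\<^sup>2) ^ (n - k)
        = 2 ^ n * ((-1) ^ k * real ((n choose k)\<^sup>2 * fact k) * (2 * (cmod z)\<^sup>2) ^ (n - k))"
      unfolding exp power_add power_mult_distrib by (simp only: ac_simps)
  qed
  also have "\<dots> = 2 ^ n * fact n * ((-1) ^ n * laguerre n (2 * (cmod z)\<^sup>2))"
    by (simp only: laguerre_reversed[symmetric]) (simp add: mult_ac)
  finally show ?thesis .
qed

section \<open>Polynomials on the unit circle\<close>

lemma coeff_mult_degree_le:
  fixes p q :: "'a::comm_semiring_0 poly"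
  assumes "degree p \<le> m" and "degree q \<le> n"
  shows "coeff (p * q) (m + n) = coeff p m * coeff q n"
proof -
  have "coeff (p * q) (m + n) = (\<Sum>i\<le>m + n. coeff p i * coeff q (m + n - i))"
    by (rule coeff_mult)
  also have "\<dots> = (\<Sum>i\<le>m + n. if i = m then coeff p m * coeff q n else 0)"
  proof (intro sum.cong refl)
    fix i
    have "coeff p i * coeff q (m + n - i) = 0" if "i \<noteq> m"
    proof (cases "i < m")
      case True
      then show ?thesis
        using assms(2) by (simp add: coeff_eq_0)
    next
      case False
      with that show ?thesis
        using assms(1) by (simp add: coeff_eq_0)
    qed
    then show "coeff p i * coeff q (m + n - i) = (if i = m then coeff p m * coeff q n else 0)"
      by auto
  qed
  finally show ?thesis
    by simp
qed

lemma coeff_power_degree_le: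
  fixes p :: "'a::comm_semiring_1 poly"
  assumes "degree p \<le> m"
  shows "coeff (p ^ k) (m * k) = coeff p m ^ k"
proof (induction k)
  case (Suc k)
  have "degree (p ^ k) \<le> m * k"
    using degree_power_le[of p k] assms by (meson le_trans mult_le_mono1)
  then have "coeff (p * p ^ k) (m + m * k) = coeff p m * coeff (p ^ k) (m * k)"
    by (rule coeff_mult_degree_le[OF assms])
  then show ?case
    using Suc by simp
qed simp

lemma poly_eq_0_if_zero_on_unit_circle:
  fixes P :: "complex poly"
  assumes "\<And>e. norm e = 1 \<Longrightarrow> poly P e = 0"
  shows "P = 0"
proof (rule ccontr)
  assume "P \<noteq> 0"
  have connected: "connected (sphere (0::complex) 1)"
    by (rule connected_sphere) simp
  have in_sphere: "1 \<in> sphere (0::complex) 1" "-1 \<in> sphere (0::complex) 1"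
    by simp_all
  have "infinite (sphere (0::complex) 1)"
  proof
    assume "finite (sphere (0::complex) 1)"
    then obtain a where "sphere (0::complex) 1 = {a}"
      using connected_finite_iff_sing[OF connected] in_sphere by blast
    with in_sphere show False
      by simp
  qed
  moreover have "sphere 0 1 \<subseteq> {e. poly P e = 0}"
    using assms by auto
  ultimately show False
    using poly_roots_finite[OF \<open>P \<noteq> 0\<close>] finite_subset by blast
qed

text \<open>On the unit circle \<open>cnj e = 1 / e\<close>, so \<open>e z\<close> and \<open>e (cnj z)\<close> for \<open>z = \<alpha> e + \<gamma> cnj e\<close> are
  the quadratic polynomials \<open>\<alpha> e\<^sup>2 + \<gamma>\<close> and \<open>cnj \<alpha> + cnj \<gamma> e\<^sup>2\<close> in \<open>e\<close>.\<close>

definition unit_circle_monomial :: "complex \<Rightarrow> complex \<Rightarrow> nat \<Rightarrow> nat \<Rightarrow> nat \<Rightarrow> complex poly" where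
  "unit_circle_monomial \<alpha> \<gamma> M a b = [:\<gamma>, 0, \<alpha>:] ^ a * [:cnj \<alpha>, 0, cnj \<gamma>:] ^ b * monom 1 (M - a - b)"

lemma poly_unit_circle_monomial:
  assumes "norm e = 1" and "a + b \<le> M"
  shows "poly (unit_circle_monomial \<alpha> \<gamma> M a b) e
    = e ^ M * (\<alpha> * e + \<gamma> * cnj e) ^ a * cnj (\<alpha> * e + \<gamma> * cnj e) ^ b"
proof -
  have unit: "e * cnj e = 1"
    using assms(1) complex_norm_square[of e] by simp
  have "poly [:\<gamma>, 0, \<alpha>:] e = e * (\<alpha> * e + \<gamma> * cnj e)"
    using unit by (simp add: algebra_simps power2_eq_square)
  moreover have "poly [:cnj \<alpha>, 0, cnj \<gamma>:] e = e * cnj (\<alpha> * e + \<gamma> * cnj e)"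
    using unit by (simp add: algebra_simps power2_eq_square)
  moreover have "e ^ M = e ^ a * e ^ b * e ^ (M - a - b)"
    using assms(2) by (simp flip: power_add)
  ultimately show ?thesis
    by (simp add: unit_circle_monomial_def poly_monom power_mult_distrib mult_ac)
qed

lemma degree_unit_circle_monomial:
  "degree (unit_circle_monomial \<alpha> \<gamma> M a b) \<le> 2 * a + 2 * b + (M - a - b)"
  unfolding unit_circle_monomial_def
  by (intro degree_mult_le[THEN order.trans] add_mono degree_power_le[THEN order.trans] degree_monom_le)
    (simp_all add: mult.commute)

lemma coeff_unit_circle_monomial_top:
  assumes "a + b \<le> M"
  shows "coeff (unit_circle_monomial \<alpha> \<gamma> M a b) (M + a + b) = \<alpha> ^ a * cnj \<gamma> ^ b"
proof -
  define X where "X = [:\<gamma>, 0, \<alpha>:]"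
  define Y where "Y = [:cnj \<alpha>, 0, cnj \<gamma>:]"
  have deg: "degree X \<le> 2" "degree Y \<le> 2"
    by (simp_all add: X_def Y_def degree_pCons_eq_if)
  then have "degree (X ^ a) \<le> 2 * a" "degree (Y ^ b) \<le> 2 * b"
    using degree_power_le[of X a] degree_power_le[of Y b] by (simp_all add: mult.commute order_trans)
  then have "degree (X ^ a * Y ^ b) \<le> 2 * a + 2 * b"
    and "coeff (X ^ a * Y ^ b) (2 * a + 2 * b) = coeff (X ^ a) (2 * a) * coeff (Y ^ b) (2 * b)"
    using degree_mult_le[of "X ^ a" "Y ^ b"] by (simp_all add: coeff_mult_degree_le)
  then have "coeff (X ^ a * Y ^ b * monom 1 (M - a - b)) (2 * a + 2 * b + (M - a - b))
      = coeff (X ^ a) (2 * a) * coeff (Y ^ b) (2 * b)"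
    by (simp add: coeff_mult_degree_le degree_monom_le)
  moreover have "coeff (X ^ a) (2 * a) = \<alpha> ^ a" "coeff (Y ^ b) (2 * b) = cnj \<gamma> ^ b"
    using coeff_power_degree_le[OF deg(1), of a] coeff_power_degree_le[OF deg(2), of b]
    by (simp_all add: X_def Y_def numeral_2_eq_2)
  moreover have "2 * a + 2 * b + (M - a - b) = M + a + b"
    using assms by simp
  ultimately show ?thesis
    unfolding unit_circle_monomial_def X_def[symmetric] Y_def[symmetric] by (simp add: ac_simps)
qed

lemma unit_circle_monomial_0:
  assumes "a + b \<le> M"
  shows "unit_circle_monomial 0 \<gamma> M a b = monom (\<gamma> ^ a * cnj \<gamma> ^ b) (M + b - a)"
proof -
  have "[:\<gamma>, 0, 0:] = monom \<gamma> 0" "[:0, 0, cnj \<gamma>:] = monom (cnj \<gamma>) 2"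
    by (simp_all add: monom_0 numeral_2_eq_2 monom_Suc)
  then have "unit_circle_monomial 0 \<gamma> M a b = monom (\<gamma> ^ a * cnj \<gamma> ^ b) (2 * b + (M - a - b))"
    by (simp add: unit_circle_monomial_def monom_power mult_monom mult.commute add.commute)
  also have "2 * b + (M - a - b) = M + b - a"
    using assms by simp
  finally show ?thesis .
qed

definition hermite_circle_poly :: "nat \<Rightarrow> (nat \<Rightarrow> complex) \<Rightarrow> complex \<Rightarrow> complex \<Rightarrow> complex poly" where
  "hermite_circle_poly N \<beta> \<alpha> \<gamma> = (\<Sum>n\<le>N. \<Sum>m\<le>N. \<Sum>k\<le>n.
     smult (\<beta> n * cnj (\<beta> m) * wigner_hermite_coeff n m k) (unit_circle_monomial \<alpha> \<gamma> (2 * N) (n - k) (m - k)))"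

lemma poly_hermite_circle_poly:
  assumes "norm e = 1"
  shows "poly (hermite_circle_poly N \<beta> \<alpha> \<gamma>) e
    = e ^ (2 * N) * (\<Sum>n\<le>N. \<Sum>m\<le>N. \<beta> n * cnj (\<beta> m) * wigner_hermite_poly n m (\<alpha> * e + \<gamma> * cnj e))"
  unfolding hermite_circle_poly_def wigner_hermite_poly_def wigner_hermite_term_def poly_sum sum_distrib_left
  by (intro sum.cong refl) (auto simp: poly_unit_circle_monomial[OF assms] mult_ac)

lemma coeff_hermite_circle_poly_top:
  "coeff (hermite_circle_poly N \<beta> \<alpha> \<gamma>) (4 * N)
     = \<beta> N * cnj (\<beta> N) * 2 ^ (2 * N) * (\<alpha> ^ N * cnj \<gamma> ^ N)"
proof -
  define c where "c n m k = \<beta> n * cnj (\<beta> m) * wigner_hermite_coeff n m k" for n m k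
  define top where "top = \<beta> N * cnj (\<beta> N) * 2 ^ (2 * N) * (\<alpha> ^ N * cnj \<gamma> ^ N)"
  have "coeff (smult (c n m k) (unit_circle_monomial \<alpha> \<gamma> (2 * N) (n - k) (m - k))) (4 * N)
      = (if k = 0 then if m = N then if n = N then top else 0 else 0 else 0)"
    if "n \<le> N" "m \<le> N" "k \<le> n" for n m k
  proof (cases "n = N \<and> m = N \<and> k = 0")
    case True
    have "coeff (unit_circle_monomial \<alpha> \<gamma> (2 * N) N N) (4 * N) = \<alpha> ^ N * cnj \<gamma> ^ N"
      using coeff_unit_circle_monomial_top[of N N "2 * N" \<alpha> \<gamma>] by (simp add: add.assoc)
    with True show ?thesis
      by (simp add: c_def top_def wigner_hermite_coeff_def flip: mult_2)
  next
    case False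
    with that have "2 * (n - k) + 2 * (m - k) + (2 * N - (n - k) - (m - k)) < 4 * N"
      by auto
    then have "coeff (unit_circle_monomial \<alpha> \<gamma> (2 * N) (n - k) (m - k)) (4 * N) = 0"
      using degree_unit_circle_monomial by (intro coeff_eq_0) (meson le_less_trans)
    with False show ?thesis
      by auto
  qed
  then have "coeff (hermite_circle_poly N \<beta> \<alpha> \<gamma>) (4 * N)
      = (\<Sum>n\<le>N. \<Sum>m\<le>N. \<Sum>k\<le>n. if k = 0 then if m = N then if n = N then top else 0 else 0 else 0)"
    unfolding hermite_circle_poly_def coeff_sum c_def[symmetric] by (intro sum.cong refl) auto
  then show ?thesis
    by (simp add: sum.delta top_def)
qed

lemma coeff_hermite_circle_poly_0:
  "coeff (hermite_circle_poly N \<beta> 0 \<gamma>) (2 * N) = (\<Sum>n\<le>N. \<beta> n * cnj (\<beta> n) * wigner_hermite_poly n n \<gamma>)"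
proof -
  define t where "t n m k = smult (\<beta> n * cnj (\<beta> m) * wigner_hermite_coeff n m k)
    (unit_circle_monomial 0 \<gamma> (2 * N) (n - k) (m - k))" for n m k
  have "(\<Sum>k\<le>n. coeff (t n m k) (2 * N)) = (if m = n then \<beta> n * cnj (\<beta> n) * wigner_hermite_poly n n \<gamma> else 0)"
    if "n \<le> N" "m \<le> N" for n m
  proof (cases "m = n")
    case True
    with that show ?thesis
      by (simp add: t_def unit_circle_monomial_0 wigner_hermite_poly_def wigner_hermite_term_def
          sum_distrib_left mult_ac)
  next
    case False
    have "coeff (t n m k) (2 * N) = 0" if "k \<le> n" for k
    proof (cases "k \<le> m")
      case True
      with False \<open>k \<le> n\<close> \<open>n \<le> N\<close> \<open>m \<le> N\<close> have "2 * N + (m - k) - (n - k) \<noteq> 2 * N"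
        by auto
      with True \<open>k \<le> n\<close> \<open>n \<le> N\<close> \<open>m \<le> N\<close> show ?thesis
        by (simp add: t_def unit_circle_monomial_0)
    qed (simp add: t_def wigner_hermite_coeff_def)
    with False show ?thesis
      by simp
  qed
  then have "coeff (hermite_circle_poly N \<beta> 0 \<gamma>) (2 * N)
      = (\<Sum>n\<le>N. \<Sum>m\<le>N. if m = n then \<beta> n * cnj (\<beta> n) * wigner_hermite_poly n n \<gamma> else 0)"
    unfolding hermite_circle_poly_def coeff_sum t_def[symmetric] by (intro sum.cong refl) auto
  then show ?thesis
    by (simp add: sum.delta')
qed

lemma hermite_superposition_circle_bound:
  assumes vanish: "\<And>e. norm e = 1 \<Longrightarrow>
      (\<Sum>n\<le>N. \<Sum>m\<le>N. \<beta> n * cnj (\<beta> m) * wigner_hermite_poly n m (\<alpha> * e + \<gamma> * cnj e)) = 0"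
    and top: "\<beta> N \<noteq> 0"
  shows "(norm \<gamma>)\<^sup>2 - (norm \<alpha>)\<^sup>2 \<le> 2 * real N + 1"
proof (rule ccontr)
  assume "\<not> ?thesis"
  then have big: "(norm \<gamma>)\<^sup>2 > 2 * real N + 1 + (norm \<alpha>)\<^sup>2"
    by simp
  have "0 \<le> (norm \<alpha>)\<^sup>2" "0 \<le> real N"
    by simp_all
  with big have lag: "2 * (norm \<gamma>)\<^sup>2 > 4 * real N + 2" and "(norm \<gamma>)\<^sup>2 > 0"
    by linarith+
  then have "\<gamma> \<noteq> 0"
    by auto
  have P0: "hermite_circle_poly N \<beta> \<alpha> \<gamma> = 0"
    by (rule poly_eq_0_if_zero_on_unit_circle) (simp add: poly_hermite_circle_poly vanish)
  then have "\<beta> N * cnj (\<beta> N) * 2 ^ (2 * N) * (\<alpha> ^ N * cnj \<gamma> ^ N) = 0"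
    by (metis coeff_0 coeff_hermite_circle_poly_top)
  then have "\<alpha> = 0"
    using top \<open>\<gamma> \<noteq> 0\<close> by (cases "N = 0") auto
  with P0 have "(\<Sum>n\<le>N. \<beta> n * cnj (\<beta> n) * wigner_hermite_poly n n \<gamma>) = 0"
    by (metis coeff_0 coeff_hermite_circle_poly_0)
  moreover have "(\<Sum>n\<le>N. \<beta> n * cnj (\<beta> n) * wigner_hermite_poly n n \<gamma>)
      = complex_of_real (\<Sum>n\<le>N. (norm (\<beta> n))\<^sup>2 * (2 ^ n * fact n * ((-1) ^ n * laguerre n (2 * (norm \<gamma>)\<^sup>2))))"
    by (simp add: wigner_hermite_poly_diagonal flip: complex_norm_square)
  moreover have "(\<Sum>n\<le>N. (norm (\<beta> n))\<^sup>2 * (2 ^ n * fact n * ((-1) ^ n * laguerre n (2 * (norm \<gamma>)\<^sup>2)))) > 0"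
  proof (rule sum_pos2)
    have "(-1) ^ n * laguerre n (2 * (norm \<gamma>)\<^sup>2) > 0" if "n \<le> N" for n
      using laguerre_sign_pos[OF lag that] .
    then show "0 < (norm (\<beta> N))\<^sup>2 * (2 ^ N * fact N * ((-1) ^ N * laguerre N (2 * (norm \<gamma>)\<^sup>2)))"
      and "\<And>n. n \<in> {..N} \<Longrightarrow> 0 \<le> (norm (\<beta> n))\<^sup>2 * (2 ^ n * fact n * ((-1) ^ n * laguerre n (2 * (norm \<gamma>)\<^sup>2)))"
      using top by (simp_all add: less_imp_le)
  qed auto
  ultimately show False
    by (simp only: of_real_eq_0_iff order_less_irrefl)
qed

section \<open>Wigner functions vanishing on a circle\<close>

lemma matrix_vector_mult_2_complex:
  fixes S :: "real^2^2"
  obtains \<alpha> \<gamma> where "(norm \<gamma>)\<^sup>2 - (norm \<alpha>)\<^sup>2 = det S"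
    and "\<And>z. Complex ((S *v z) $ 1) (- (S *v z) $ 2)
           = \<alpha> * Complex (z $ 1) (z $ 2) + \<gamma> * cnj (Complex (z $ 1) (z $ 2))"
proof -
  define \<alpha> where "\<alpha> = Complex ((S $ 1 $ 1 - S $ 2 $ 2) / 2) (- (S $ 2 $ 1 + S $ 1 $ 2) / 2)"
  define \<gamma> where "\<gamma> = Complex ((S $ 1 $ 1 + S $ 2 $ 2) / 2) ((S $ 1 $ 2 - S $ 2 $ 1) / 2)"
  have "(norm \<gamma>)\<^sup>2 - (norm \<alpha>)\<^sup>2 = det S"
    unfolding det_2 \<alpha>_def \<gamma>_def cmod_power2 by (simp add: power2_eq_square field_simps)
  moreover have "Complex ((S *v z) $ 1) (- (S *v z) $ 2)
      = \<alpha> * Complex (z $ 1) (z $ 2) + \<gamma> * cnj (Complex (z $ 1) (z $ 2))" for z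
    by (simp add: \<alpha>_def \<gamma>_def matrix_vector_mult_def sum_2 complex_eq_iff field_simps)
  ultimately show ?thesis
    by (rule that)
qed

lemma circle_in_complex_coordinates:
  fixes S :: "real^2^2" and R hbar :: real
  assumes "hbar > 0" and "R \<ge> 0"
  obtains \<alpha> \<gamma> where "(norm \<gamma>)\<^sup>2 - (norm \<alpha>)\<^sup>2 = det S * R\<^sup>2 / hbar"
    and "\<And>e. norm e = 1 \<Longrightarrow> \<exists>z. norm z = R \<and>
      complex_of_real ((S *v z) $ 1 / sqrt hbar) - \<i> * complex_of_real ((S *v z) $ 2 / sqrt hbar)
        = \<alpha> * e + \<gamma> * cnj e"
proof -
  obtain \<alpha> \<gamma> where det: "(norm \<gamma>)\<^sup>2 - (norm \<alpha>)\<^sup>2 = det S"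
    and S_complex: "\<And>z. Complex ((S *v z) $ 1) (- (S *v z) $ 2)
      = \<alpha> * Complex (z $ 1) (z $ 2) + \<gamma> * cnj (Complex (z $ 1) (z $ 2))"
    using matrix_vector_mult_2_complex[of S] by blast
  define c where "c = complex_of_real (R / sqrt hbar)"
  have "(norm (c * \<gamma>))\<^sup>2 - (norm (c * \<alpha>))\<^sup>2 = (R / sqrt hbar)\<^sup>2 * ((norm \<gamma>)\<^sup>2 - (norm \<alpha>)\<^sup>2)"
    by (simp add: c_def norm_mult power_mult_distrib power_divide right_diff_distrib del: of_real_divide)
  then have "(norm (c * \<gamma>))\<^sup>2 - (norm (c * \<alpha>))\<^sup>2 = det S * R\<^sup>2 / hbar"
    using det assms by (simp add: power_divide)
  moreover have "\<exists>z. norm z = R \<and>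
      complex_of_real ((S *v z) $ 1 / sqrt hbar) - \<i> * complex_of_real ((S *v z) $ 2 / sqrt hbar)
        = (c * \<alpha>) * e + (c * \<gamma>) * cnj e" if "norm e = 1" for e
  proof -
    define z :: "real^2" where "z = vector [R * Re e, R * Im e]"
    have "norm z = sqrt ((R * Re e)\<^sup>2 + (R * Im e)\<^sup>2)"
      by (simp add: z_def norm_vec_def L2_set_def sum_2)
    also have "(R * Re e)\<^sup>2 + (R * Im e)\<^sup>2 = R\<^sup>2 * (norm e)\<^sup>2"
      unfolding cmod_power2 by (simp add: power_mult_distrib algebra_simps)
    finally have "norm z = R"
      using that assms by simp
    have "complex_of_real ((S *v z) $ 1 / sqrt hbar) - \<i> * complex_of_real ((S *v z) $ 2 / sqrt hbar)
        = Complex ((S *v z) $ 1) (- (S *v z) $ 2) / complex_of_real (sqrt hbar)"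
      by (simp add: complex_eq_iff)
    also have "\<dots> = (c * \<alpha>) * e + (c * \<gamma>) * cnj e"
      unfolding S_complex c_def by (simp add: z_def complex_eq_iff add_divide_distrib algebra_simps)
    finally show ?thesis
      using \<open>norm z = R\<close> by blast
  qed
  ultimately show ?thesis
    using that by blast
qed

theorem theorem8:
  fixes hbar R :: real and f :: "real \<Rightarrow> complex" and N :: nat and b :: "nat \<Rightarrow> complex"
    and S :: "real^2^2"
  assumes hbar: "hbar > 0"
    and f_L2: "square_integrable f"
    and S_det: "det S = 1"
    and bN: "b N \<noteq> 0"
    and Wf: "\<And>z :: real^2. wigner hbar f f (z $ 1) (z $ 2) =
              (\<Sum>n\<le>N. \<Sum>m\<le>N. b n * cnj (b m) *
                 wigner hbar (hermite_fun hbar n) (hermite_fun hbar m) ((S *v z) $ 1) ((S *v z) $ 2))"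
    and R: "R > 0"
    and vanish: "\<And>z :: real^2. norm z = R \<Longrightarrow> wigner hbar f f (z $ 1) (z $ 2) = 0"
  shows "real N \<ge> (R\<^sup>2 / hbar - 1) / 2"
proof -
  obtain \<alpha> \<gamma> where radius: "(norm \<gamma>)\<^sup>2 - (norm \<alpha>)\<^sup>2 = det S * R\<^sup>2 / hbar"
    and circle: "\<And>e. norm e = 1 \<Longrightarrow> \<exists>z. norm z = R \<and>
      complex_of_real ((S *v z) $ 1 / sqrt hbar) - \<i> * complex_of_real ((S *v z) $ 2 / sqrt hbar)
        = \<alpha> * e + \<gamma> * cnj e"
    using circle_in_complex_coordinates[OF hbar less_imp_le[OF R], of S] by blast
  define \<beta> where "\<beta> n = b n * complex_of_real (hermite_norm hbar n)" for n
  have "(\<Sum>n\<le>N. \<Sum>m\<le>N. \<beta> n * cnj (\<beta> m) * wigner_hermite_poly n m (\<alpha> * e + \<gamma> * cnj e)) = 0"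
    if e: "norm e = 1" for e
  proof -
    obtain z where "norm z = R" and zeta: "complex_of_real ((S *v z) $ 1 / sqrt hbar)
        - \<i> * complex_of_real ((S *v z) $ 2 / sqrt hbar) = \<alpha> * e + \<gamma> * cnj e"
      using circle[OF e] by blast
    have "0 = wigner hbar f f (z $ 1) (z $ 2)"
      using vanish \<open>norm z = R\<close> by simp
    also have "\<dots> = complex_of_real (exp (- (((S *v z) $ 1)\<^sup>2 + ((S *v z) $ 2)\<^sup>2) / hbar) / sqrt (pi * hbar))
        * (\<Sum>n\<le>N. \<Sum>m\<le>N. \<beta> n * cnj (\<beta> m) * wigner_hermite_poly n m (\<alpha> * e + \<gamma> * cnj e))"
      unfolding Wf wigner_hermite_superposition[OF hbar] zeta \<beta>_def ..
    finally show ?thesis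
      using hbar by simp
  qed
  moreover have "\<beta> N \<noteq> 0"
    using bN hermite_norm_pos[OF hbar, of N] by (simp add: \<beta>_def)
  ultimately have "(norm \<gamma>)\<^sup>2 - (norm \<alpha>)\<^sup>2 \<le> 2 * real N + 1"
    by (rule hermite_superposition_circle_bound)
  then show ?thesis
    using radius S_det by simp
qed

end
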